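(* Let $F=\sum_{\mathbf i\in I_F}a_{\mathbf i}\mathbf{x}^{\mathbf i}\in K[x_1,\dots,x_n]$ be irreducible and $\mathbf u\in(K^* )^n$. Then $F$ and $D_{\mathbf u}(F)$ are not coprime if and only if $\frac{a_{\mathbf i}\mathbf u^{\mathbf i}}{a_{\mathbf j}\mathbf u^{\mathbf j}}\in\mathbf{k}^*$ for all $\mathbf i,\mathbf j\in I_F$.
   Context: $\mathbf{k}$ is an algebraically closed field of characteristic zero, $K=\mathbf{k}(C)$ the function field of a smooth projective curve $C$ over $\mathbf{k}$. Fix $t\in K\setminus\mathbf{k}$; $\eta'=d\eta/dt$ is the derivation of $K$ extending $d/dt$ on $\mathbf{k}(t)$ (its kernel is $\mathbf{k}$). $I_F$ is the set of exponents $\mathbf i$ with $a_{\mathbf i}\ne0$, $\mathbf x^{\mathbf i}=x_1^{i_1}\cdots x_n^{i_n}$, $\mathbf u^{\mathbf i}=u_1^{i_1}\cdots u_n^{i_n}$, and $D_{\mathbf u}(F)=\sum_{\mathbf i\in I_F}\frac{(a_{\mathbf i}\mathbf{u}^{\mathbf i})'}{\mathbf{u}^{\mathbf i}}\mathbf{x}^{\mathbf i}$. "Not coprime" means having a common nonconstant factor in $K[x_1,\dots,x_n]$ (the zero polynomial is divisible by $F$). *)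

theory Defs
  imports "HOL-Library.Poly_Mapping" "HOL-Computational_Algebra.Polynomial"
    "HOL-Computational_Algebra.Factorial_Ring"
begin

text \<open>Multivariate polynomials in the variables indexed by the finite type 'n with
coefficients in 'a are represented as poly_mappings from exponent vectors
(finitely supported functions 'n to nat) to coefficients. The coefficient a_i of F is lookup F i and
I_F is Poly_Mapping.keys F.\<close>

definition is_derivation :: "('a::field \<Rightarrow> 'a) \<Rightarrow> bool" where
  "is_derivation d \<longleftrightarrow> (\<forall>x y. d (x + y) = d x + d y) \<and> (\<forall>x y. d (x * y) = x * d y + d x * y)"

definition constants_alg_closed :: "('a::field \<Rightarrow> 'a) \<Rightarrow> bool" where
  "constants_alg_closed d \<longleftrightarrow>
     (\<forall>p :: 'a poly. degree p > 0 \<and> (\<forall>i. d (coeff p i) = 0) \<longrightarrow> (\<exists>x. d x = 0 \<and> poly p x = 0))"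

definition monval :: "('n::finite \<Rightarrow> 'a::comm_semiring_1) \<Rightarrow> ('n \<Rightarrow>\<^sub>0 nat) \<Rightarrow> 'a" where
  "monval u m = (\<Prod>j\<in>UNIV. u j ^ Poly_Mapping.lookup m j)"

definition Du :: "('a::field \<Rightarrow> 'a) \<Rightarrow> ('n::finite \<Rightarrow> 'a) \<Rightarrow> (('n \<Rightarrow>\<^sub>0 nat) \<Rightarrow>\<^sub>0 'a) \<Rightarrow> (('n \<Rightarrow>\<^sub>0 nat) \<Rightarrow>\<^sub>0 'a)" where
  "Du d u F = Poly_Mapping.mapp (\<lambda>m a. d (a * monval u m) / monval u m) F"

definition nonconstant :: "(('n \<Rightarrow>\<^sub>0 nat) \<Rightarrow>\<^sub>0 'a::zero) \<Rightarrow> bool" where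
  "nonconstant G \<longleftrightarrow> (\<exists>m \<in> Poly_Mapping.keys G. m \<noteq> 0)"

definition not_coprime :: "(('n \<Rightarrow>\<^sub>0 nat) \<Rightarrow>\<^sub>0 'a::comm_semiring_1) \<Rightarrow> (('n \<Rightarrow>\<^sub>0 nat) \<Rightarrow>\<^sub>0 'a) \<Rightarrow> bool" where
  "not_coprime F G \<longleftrightarrow> (\<exists>H. nonconstant H \<and> H dvd F \<and> H dvd G)"

end

theory Submission
  imports Defs "HOL-Library.Countable"
begin

text \<open>As F is irreducible, a common nonconstant factor of F and D_u(F) is an associate of F, so
F and D_u(F) fail to be coprime exactly when F divides D_u(F). Since D_u(F) only involves
monomials of F, comparing lexicographically largest and smallest monomials shows that the quotient
is a scalar q. Coefficientwise, D_u(F) = q F says that every c_i = a_i u^i with i in I_F has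
logarithmic derivative c_i'/c_i = q, and two nonzero elements have the same logarithmic derivative
iff their quotient is a constant.\<close>

lemma lookup_mult_unique_decomposition:
  fixes P Q :: "'m::cancel_comm_monoid_add \<Rightarrow>\<^sub>0 'a::comm_semiring_1"
  assumes unique: "\<And>l q. l \<in> Poly_Mapping.keys P \<Longrightarrow> q \<in> Poly_Mapping.keys Q \<Longrightarrow>
    l + q = a + b \<Longrightarrow> l = a"
  shows "Poly_Mapping.lookup (P * Q) (a + b) = Poly_Mapping.lookup P a * Poly_Mapping.lookup Q b"
proof -
  have "Poly_Mapping.lookup P l * Sum_any (\<lambda>q. Poly_Mapping.lookup Q q when a + b = l + q)
      = (Poly_Mapping.lookup P a * Poly_Mapping.lookup Q b when l = a)" for l
  proof (cases "l = a")
    case True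
    then show ?thesis by (simp add: eq_commute[of b])
  next
    case False
    have "Poly_Mapping.lookup P l * (Poly_Mapping.lookup Q q when a + b = l + q) = 0" for q
      using unique[of l q] False
      by (cases "Poly_Mapping.lookup P l = 0"; cases "Poly_Mapping.lookup Q q = 0")
        (auto simp: in_keys_iff when_def eq_commute[of "a + b"])
    moreover have "finite {q. (Poly_Mapping.lookup Q q when a + b = l + q) \<noteq> 0}"
      by (rule finite_subset[of _ "Poly_Mapping.keys Q"]) (auto simp: in_keys_iff)
    ultimately show ?thesis
      using False by (simp add: Sum_any_right_distrib)
  qed
  then show ?thesis
    by (simp add: lookup_mult)
qed

lemma lookup_single_zero_mult:
  "Poly_Mapping.lookup (Poly_Mapping.single 0 c * F) m = c * Poly_Mapping.lookup F m"
  by (simp add: mult_map_scale_conv_mult[symmetric] map.rep_eq when_def)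

lemma eq_single_zero_if_keys_subset_zero:
  assumes "Poly_Mapping.keys Q \<subseteq> {0}"
  shows "Q = Poly_Mapping.single 0 (Poly_Mapping.lookup Q 0)"
  using assms by (intro poly_mapping_eqI) (auto simp: lookup_single when_def in_keys_iff)

lemma sum_in_keys_mult_if_extremal:
  fixes P Q :: "'m::cancel_comm_monoid_add \<Rightarrow>\<^sub>0 'a::idom"
    and \<phi> :: "'m \<Rightarrow> 'l::linordered_cancel_ab_semigroup_add"
  assumes inj: "inj \<phi>" and additive: "\<And>x y. \<phi> (x + y) = \<phi> x + \<phi> y"
    and a: "a \<in> Poly_Mapping.keys P" and b: "b \<in> Poly_Mapping.keys Q"
    and extremal: "(\<forall>k\<in>Poly_Mapping.keys P. \<phi> k \<le> \<phi> a) \<and> (\<forall>k\<in>Poly_Mapping.keys Q. \<phi> k \<le> \<phi> b)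
      \<or> (\<forall>k\<in>Poly_Mapping.keys P. \<phi> a \<le> \<phi> k) \<and> (\<forall>k\<in>Poly_Mapping.keys Q. \<phi> b \<le> \<phi> k)"
  shows "a + b \<in> Poly_Mapping.keys (P * Q)"
proof -
  have "Poly_Mapping.lookup (P * Q) (a + b) = Poly_Mapping.lookup P a * Poly_Mapping.lookup Q b"
  proof (rule lookup_mult_unique_decomposition)
    fix l q
    assume "l \<in> Poly_Mapping.keys P" "q \<in> Poly_Mapping.keys Q" "l + q = a + b"
    then have "\<phi> l + \<phi> q = \<phi> a + \<phi> b"
        and "\<phi> l \<le> \<phi> a \<and> \<phi> q \<le> \<phi> b \<or> \<phi> a \<le> \<phi> l \<and> \<phi> b \<le> \<phi> q"
      using extremal by (metis additive, blast)
    then have "\<phi> l = \<phi> a"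
      by (metis add_less_le_mono order.strict_iff_order order_less_irrefl)
    then show "l = a"
      using inj by (simp add: inj_eq)
  qed
  then show ?thesis
    using a b by (simp add: in_keys_iff)
qed

text \<open>Exponent vectors are moved along the numbering to_nat of the variables to finitely
supported functions on nat, whose lexicographic order (from Poly_Mapping) is a linear order
compatible with addition; it plays the role of a monomial order.\<close>

definition exponent_lex_embedding :: "('n::countable \<Rightarrow>\<^sub>0 nat) \<Rightarrow> (nat \<Rightarrow>\<^sub>0 nat)" where
  "exponent_lex_embedding m =
     Abs_poly_mapping (\<lambda>k. if to_nat (from_nat k :: 'n) = k then Poly_Mapping.lookup m (from_nat k) else 0)"

lemma lookup_exponent_lex_embedding:
  fixes m :: "'n::countable \<Rightarrow>\<^sub>0 nat"
  shows "Poly_Mapping.lookup (exponent_lex_embedding m) k =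
     (if to_nat (from_nat k :: 'n) = k then Poly_Mapping.lookup m (from_nat k) else 0)"
proof -
  have "{k. (if to_nat (from_nat k :: 'n) = k then Poly_Mapping.lookup m (from_nat k) else 0) \<noteq> 0}
      \<subseteq> to_nat ` Poly_Mapping.keys m"
  proof
    fix k
    assume "k \<in> {k. (if to_nat (from_nat k :: 'n) = k then Poly_Mapping.lookup m (from_nat k) else 0) \<noteq> 0}"
    then have "to_nat (from_nat k :: 'n) = k" "from_nat k \<in> Poly_Mapping.keys m"
      by (auto simp: in_keys_iff split: if_splits)
    then show "k \<in> to_nat ` Poly_Mapping.keys m"
      by (rule image_eqI[OF sym])
  qed
  then show ?thesis
    unfolding exponent_lex_embedding_def by (simp add: finite_subset)
qed

lemma exponent_lex_embedding_add:
  "exponent_lex_embedding (x + y) = exponent_lex_embedding x + exponent_lex_embedding y"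
  by (rule poly_mapping_eqI) (simp add: lookup_exponent_lex_embedding lookup_add)

lemma exponent_lex_embedding_zero: "exponent_lex_embedding 0 = 0"
  by (rule poly_mapping_eqI) (simp add: lookup_exponent_lex_embedding)

lemma inj_exponent_lex_embedding: "inj exponent_lex_embedding"
proof (rule injI)
  fix x y :: "'n::countable \<Rightarrow>\<^sub>0 nat"
  assume "exponent_lex_embedding x = exponent_lex_embedding y"
  then have "Poly_Mapping.lookup (exponent_lex_embedding x) (to_nat j)
      = Poly_Mapping.lookup (exponent_lex_embedding y) (to_nat j)" for j :: 'n
    by simp
  then show "x = y"
    by (intro poly_mapping_eqI) (simp add: lookup_exponent_lex_embedding)
qed

lemma lex_extreme_keys_mult:
  fixes P Q :: "('n::countable \<Rightarrow>\<^sub>0 nat) \<Rightarrow>\<^sub>0 'a::idom"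
  assumes "P \<noteq> 0" and "Q \<noteq> 0"
  obtains a a' b b' where
    "\<forall>k\<in>Poly_Mapping.keys P. exponent_lex_embedding a' \<le> exponent_lex_embedding k
       \<and> exponent_lex_embedding k \<le> exponent_lex_embedding a"
    "\<forall>k\<in>Poly_Mapping.keys Q. exponent_lex_embedding b' \<le> exponent_lex_embedding k
       \<and> exponent_lex_embedding k \<le> exponent_lex_embedding b"
    "a + b \<in> Poly_Mapping.keys (P * Q)" and "a' + b' \<in> Poly_Mapping.keys (P * Q)"
proof -
  let ?\<phi> = "exponent_lex_embedding :: ('n \<Rightarrow>\<^sub>0 nat) \<Rightarrow> nat \<Rightarrow>\<^sub>0 nat"
  have extremes: "\<exists>x\<in>Poly_Mapping.keys R. ?\<phi> x = Max (?\<phi> ` Poly_Mapping.keys R)"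
    "\<exists>x\<in>Poly_Mapping.keys R. ?\<phi> x = Min (?\<phi> ` Poly_Mapping.keys R)"
    if "R \<noteq> 0" for R :: "('n \<Rightarrow>\<^sub>0 nat) \<Rightarrow>\<^sub>0 'a"
    using Max_in[of "?\<phi> ` Poly_Mapping.keys R"] Min_in[of "?\<phi> ` Poly_Mapping.keys R"] that
    by (auto simp: image_iff)
  obtain a a' b b' where
    a: "a \<in> Poly_Mapping.keys P" "?\<phi> a = Max (?\<phi> ` Poly_Mapping.keys P)" and
    a': "a' \<in> Poly_Mapping.keys P" "?\<phi> a' = Min (?\<phi> ` Poly_Mapping.keys P)" and
    b: "b \<in> Poly_Mapping.keys Q" "?\<phi> b = Max (?\<phi> ` Poly_Mapping.keys Q)" and
    b': "b' \<in> Poly_Mapping.keys Q" "?\<phi> b' = Min (?\<phi> ` Poly_Mapping.keys Q)"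
    using extremes assms by meson
  have P_bounds: "\<forall>k\<in>Poly_Mapping.keys P. ?\<phi> a' \<le> ?\<phi> k \<and> ?\<phi> k \<le> ?\<phi> a"
    and Q_bounds: "\<forall>k\<in>Poly_Mapping.keys Q. ?\<phi> b' \<le> ?\<phi> k \<and> ?\<phi> k \<le> ?\<phi> b"
    using a a' b b' by simp_all
  have "a + b \<in> Poly_Mapping.keys (P * Q)"
    by (rule sum_in_keys_mult_if_extremal[where \<phi> = ?\<phi>,
          OF inj_exponent_lex_embedding exponent_lex_embedding_add a(1) b(1)])
      (use P_bounds Q_bounds in auto)
  moreover have "a' + b' \<in> Poly_Mapping.keys (P * Q)"
    by (rule sum_in_keys_mult_if_extremal[where \<phi> = ?\<phi>,
          OF inj_exponent_lex_embedding exponent_lex_embedding_add a'(1) b'(1)])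
      (use P_bounds Q_bounds in auto)
  ultimately show ?thesis
    using that P_bounds Q_bounds by blast
qed

lemma keys_subset_zero_if_lex_bounds:
  fixes P :: "('n::countable \<Rightarrow>\<^sub>0 nat) \<Rightarrow>\<^sub>0 'a::zero"
  assumes "\<forall>k\<in>Poly_Mapping.keys P. exponent_lex_embedding a' \<le> exponent_lex_embedding k
       \<and> exponent_lex_embedding k \<le> exponent_lex_embedding a"
    and "exponent_lex_embedding a \<le> 0" and "0 \<le> exponent_lex_embedding a'"
  shows "Poly_Mapping.keys P \<subseteq> {0}"
proof
  fix k
  assume "k \<in> Poly_Mapping.keys P"
  then have "exponent_lex_embedding k = exponent_lex_embedding 0"
    using assms by (metis antisym order_trans exponent_lex_embedding_zero)
  then show "k \<in> {0}"
    using injD[OF inj_exponent_lex_embedding] by blast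
qed

lemma keys_subset_zero_if_mult_eq_one:
  fixes H G :: "('n::countable \<Rightarrow>\<^sub>0 nat) \<Rightarrow>\<^sub>0 'a::idom"
  assumes "H * G = 1"
  shows "Poly_Mapping.keys H \<subseteq> {0}"
proof -
  have "H \<noteq> 0" "G \<noteq> 0"
    using assms by auto
  then obtain a a' b b' where bounds:
      "\<forall>k\<in>Poly_Mapping.keys H. exponent_lex_embedding a' \<le> exponent_lex_embedding k
         \<and> exponent_lex_embedding k \<le> exponent_lex_embedding a"
    and "a + b \<in> Poly_Mapping.keys (H * G)" "a' + b' \<in> Poly_Mapping.keys (H * G)"
    by (rule lex_extreme_keys_mult)
  then have "a + b = 0" "a' + b' = 0"
    using assms by simp_all
  then have "a = 0" "a' = 0"
    by (metis add_eq_0_iff_both_eq_0 lookup_add lookup_zero poly_mapping_eqI)+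
  then show ?thesis
    using bounds keys_subset_zero_if_lex_bounds[of H a' a] by (simp add: exponent_lex_embedding_zero)
qed

lemma keys_subset_zero_if_keys_mult_subset:
  fixes Q F :: "('n::countable \<Rightarrow>\<^sub>0 nat) \<Rightarrow>\<^sub>0 'a::idom"
  assumes "F \<noteq> 0" and "Poly_Mapping.keys (Q * F) \<subseteq> Poly_Mapping.keys F"
  shows "Poly_Mapping.keys Q \<subseteq> {0}"
proof (cases "Q = 0")
  case False
  let ?\<phi> = "exponent_lex_embedding :: ('n \<Rightarrow>\<^sub>0 nat) \<Rightarrow> nat \<Rightarrow>\<^sub>0 nat"
  obtain a a' b b' where
    Q_bounds: "\<forall>k\<in>Poly_Mapping.keys Q. ?\<phi> a' \<le> ?\<phi> k \<and> ?\<phi> k \<le> ?\<phi> a" and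
    F_bounds: "\<forall>k\<in>Poly_Mapping.keys F. ?\<phi> b' \<le> ?\<phi> k \<and> ?\<phi> k \<le> ?\<phi> b" and
    "a + b \<in> Poly_Mapping.keys F" "a' + b' \<in> Poly_Mapping.keys F"
    by (rule lex_extreme_keys_mult[OF False assms(1)]) (use assms(2) in blast)
  then have "?\<phi> a + ?\<phi> b \<le> 0 + ?\<phi> b" "0 + ?\<phi> b' \<le> ?\<phi> a' + ?\<phi> b'"
    by (auto simp: exponent_lex_embedding_add)
  then have "?\<phi> a \<le> 0" "0 \<le> ?\<phi> a'"
    by (simp_all only: add_le_cancel_right)
  then show ?thesis
    using Q_bounds by (rule keys_subset_zero_if_lex_bounds[rotated])
qed simp

lemma dvd_one_iff_keys_subset_zero:
  fixes H :: "('n::countable \<Rightarrow>\<^sub>0 nat) \<Rightarrow>\<^sub>0 'a::field"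
  shows "H dvd 1 \<longleftrightarrow> H \<noteq> 0 \<and> Poly_Mapping.keys H \<subseteq> {0}"
proof
  assume "H dvd 1"
  then obtain G where "1 = H * G"
    by (rule dvdE)
  then show "H \<noteq> 0 \<and> Poly_Mapping.keys H \<subseteq> {0}"
    using keys_subset_zero_if_mult_eq_one[of H G] by auto
next
  assume H: "H \<noteq> 0 \<and> Poly_Mapping.keys H \<subseteq> {0}"
  define c where "c = Poly_Mapping.lookup H 0"
  have "H = Poly_Mapping.single 0 c"
    using H by (simp add: c_def eq_single_zero_if_keys_subset_zero)
  moreover have "c \<noteq> 0"
    using H calculation by auto
  ultimately have "H * Poly_Mapping.single 0 (1 / c) = 1"
    by (simp add: mult_single)
  then show "H dvd 1"
    by (metis dvdI)
qed

lemma not_coprime_iff_dvd_if_irreducible: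
  fixes F G :: "('n::countable \<Rightarrow>\<^sub>0 nat) \<Rightarrow>\<^sub>0 'a::field"
  assumes "irreducible F"
  shows "not_coprime F G \<longleftrightarrow> F dvd G"
proof
  assume "not_coprime F G"
  then obtain H where "nonconstant H" "H dvd F" "H dvd G"
    by (auto simp: not_coprime_def)
  then obtain K where F: "F = H * K" and "\<not> H dvd 1"
    by (auto simp: nonconstant_def dvd_one_iff_keys_subset_zero)
  then have "K dvd 1"
    using irreducibleD[OF assms] by blast
  then obtain K' where "1 = K * K'"
    by (rule dvdE)
  then have "H = F * K'"
    by (metis F mult.assoc mult_1_right)
  then show "F dvd G"
    using \<open>H dvd G\<close> by (metis dvd_trans dvd_triv_left)
next
  assume "F dvd G"
  moreover have "nonconstant F"
    using assms irreducible_not_unit[OF assms]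
    by (auto simp: nonconstant_def dvd_one_iff_keys_subset_zero)
  ultimately show "not_coprime F G"
    by (auto simp: not_coprime_def)
qed

lemma dvd_iff_scalar_multiple_if_keys_subset:
  fixes F G :: "('n::countable \<Rightarrow>\<^sub>0 nat) \<Rightarrow>\<^sub>0 'a::idom"
  assumes "F \<noteq> 0" and "Poly_Mapping.keys G \<subseteq> Poly_Mapping.keys F"
  shows "F dvd G \<longleftrightarrow> (\<exists>c. \<forall>m. Poly_Mapping.lookup G m = c * Poly_Mapping.lookup F m)"
proof
  assume "F dvd G"
  then obtain Q where "G = Q * F"
    by (metis dvdE mult.commute)
  moreover have "Q = Poly_Mapping.single 0 (Poly_Mapping.lookup Q 0)"
    using keys_subset_zero_if_keys_mult_subset[OF assms(1)] assms(2) calculation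
    by (simp add: eq_single_zero_if_keys_subset_zero)
  ultimately show "\<exists>c. \<forall>m. Poly_Mapping.lookup G m = c * Poly_Mapping.lookup F m"
    by (metis lookup_single_zero_mult)
next
  assume "\<exists>c. \<forall>m. Poly_Mapping.lookup G m = c * Poly_Mapping.lookup F m"
  then obtain c where "\<forall>m. Poly_Mapping.lookup G m = c * Poly_Mapping.lookup F m"
    by blast
  then have "G = Poly_Mapping.single 0 c * F"
    by (intro poly_mapping_eqI) (simp add: lookup_single_zero_mult)
  then show "F dvd G"
    by simp
qed

lemma derivation_zero: "is_derivation d \<Longrightarrow> d 0 = 0"
  unfolding is_derivation_def by (metis add_cancel_right_right)

lemma derivation_divide_eq_0_iff:
  assumes "is_derivation d" and "x \<noteq> 0" and "y \<noteq> 0"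
  shows "d (x / y) = 0 \<longleftrightarrow> d x / x = d y / y"
proof -
  have "d x = d (x / y * y)"
    using assms(3) by simp
  also have "\<dots> = x / y * d y + d (x / y) * y"
    using assms(1) unfolding is_derivation_def by blast
  finally have "d x / x = d y / y + d (x / y) * (y / x)"
    using assms(2,3) by (simp add: field_simps)
  then show ?thesis
    using assms(2,3) by auto
qed

lemma keys_Du_subset: "Poly_Mapping.keys (Du d u F) \<subseteq> Poly_Mapping.keys F"
  unfolding Du_def by (rule keys_mapp_subset)

lemma lookup_Du:
  assumes "is_derivation d"
  shows "Poly_Mapping.lookup (Du d u F) m
    = d (Poly_Mapping.lookup F m * monval u m) / monval u m"
  using derivation_zero[OF assms] by (simp add: Du_def lookup_mapp when_def in_keys_iff)

lemma monval_nonzero: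
  fixes u :: "'n::finite \<Rightarrow> 'a::idom"
  assumes "\<And>j. u j \<noteq> 0"
  shows "monval u m \<noteq> 0"
  using assms by (simp add: monval_def)

lemma Du_eq_scalar_multiple_iff:
  fixes F :: "('n::finite \<Rightarrow>\<^sub>0 nat) \<Rightarrow>\<^sub>0 'a::field"
  assumes "is_derivation d" and "\<And>j. u j \<noteq> 0"
  shows "(\<forall>m. Poly_Mapping.lookup (Du d u F) m = q * Poly_Mapping.lookup F m) \<longleftrightarrow>
    (\<forall>m\<in>Poly_Mapping.keys F.
       d (Poly_Mapping.lookup F m * monval u m) / (Poly_Mapping.lookup F m * monval u m) = q)"
proof -
  have "Poly_Mapping.lookup (Du d u F) m = q * Poly_Mapping.lookup F m \<longleftrightarrow>
      d (Poly_Mapping.lookup F m * monval u m) / (Poly_Mapping.lookup F m * monval u m) = q"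
    if "m \<in> Poly_Mapping.keys F" for m
    using that monval_nonzero[of u m] assms
    by (auto simp: lookup_Du in_keys_iff field_simps)
  moreover have "Poly_Mapping.lookup (Du d u F) m = q * Poly_Mapping.lookup F m"
    if "m \<notin> Poly_Mapping.keys F" for m
    using that derivation_zero[OF assms(1)] by (simp add: lookup_Du[OF assms(1)] in_keys_iff)
  ultimately show ?thesis
    by blast
qed

theorem lemma3p3:
  fixes d :: "'a::field_char_0 \<Rightarrow> 'a"
    and F :: "('n::finite \<Rightarrow>\<^sub>0 nat) \<Rightarrow>\<^sub>0 'a"
    and u :: "'n \<Rightarrow> 'a"
  assumes der: "is_derivation d"
    and t_ex: "\<exists>t. d t = 1"
    and kclosed: "constants_alg_closed d"
    and irr: "irreducible F"
    and u_nz: "\<forall>j. u j \<noteq> 0"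
  shows "not_coprime F (Du d u F) \<longleftrightarrow>
    (\<forall>i\<in>Poly_Mapping.keys F. \<forall>j\<in>Poly_Mapping.keys F.
       let r = (Poly_Mapping.lookup F i * monval u i) / (Poly_Mapping.lookup F j * monval u j) in d r = 0 \<and> r \<noteq> 0)"
proof -
  define c where "c m = Poly_Mapping.lookup F m * monval u m" for m
  have u_nonzero: "\<And>j. u j \<noteq> 0"
    using u_nz by blast
  have c_nonzero: "c m \<noteq> 0" if "m \<in> Poly_Mapping.keys F" for m
    using that monval_nonzero[of u m] u_nonzero by (simp add: c_def in_keys_iff)
  have "F \<noteq> 0"
    using irr by auto
  have "not_coprime F (Du d u F) \<longleftrightarrow> F dvd Du d u F"
    by (rule not_coprime_iff_dvd_if_irreducible[OF irr])
  also have "\<dots> \<longleftrightarrow> (\<exists>q. \<forall>m\<in>Poly_Mapping.keys F. d (c m) / c m = q)"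
    using dvd_iff_scalar_multiple_if_keys_subset[OF \<open>F \<noteq> 0\<close> keys_Du_subset]
      Du_eq_scalar_multiple_iff[where u = u, OF der u_nonzero]
    by (simp add: c_def)
  also have "\<dots> \<longleftrightarrow>
      (\<forall>i\<in>Poly_Mapping.keys F. \<forall>j\<in>Poly_Mapping.keys F. d (c i) / c i = d (c j) / c j)"
    using \<open>F \<noteq> 0\<close> by (auto simp: keys_eq_empty[symmetric] simp del: keys_eq_empty)
  also have "\<dots> \<longleftrightarrow>
      (\<forall>i\<in>Poly_Mapping.keys F. \<forall>j\<in>Poly_Mapping.keys F. d (c i / c j) = 0 \<and> c i / c j \<noteq> 0)"
    using derivation_divide_eq_0_iff[OF der] c_nonzero by simp
  finally show ?thesis
    by (simp add: c_def Let_def)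
qed

end
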